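(* Let $K_c\subset\mathbb{E}^3$ be a cap body of a ball which is centrally symmetric. Then the illumination number of $K_c$ satisfies $I(K_c)\le 6$. Moreover this bound is sharp: there exists a centrally symmetric cap body of a ball in $\mathbb{E}^3$ whose illumination number equals $6$.
   Context: A cap body of a ball is the convex hull of a closed Euclidean ball $B^d[\boldsymbol c,r]\subset\mathbb{E}^d$ and a countable set of points $\{\boldsymbol v_i\mid i\in I\}\subset \mathbb{E}^d\setminus B^d[\boldsymbol c,r]$ such that for any two distinct $i,j\in I$ the segment $\overline{\boldsymbol v_i\boldsymbol v_j}$ intersects $B^d[\boldsymbol c,r]$. For a convex body $K$ (compact convex set with nonempty interior), a direction $\boldsymbol u\in\mathbb{S}^{d-1}$ illuminates a boundary point $\boldsymbol p$ of $K$ if $\boldsymbol p+\lambda\boldsymbol u$ lies in the interior of $K$ for some $\lambda>0$; the illumination number $I(K)$ is the smallest number of directions such that every boundary point of $K$ is illuminated by at least one of them. *)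

theory Defs
  imports "HOL-Analysis.Analysis"
begin

definition cap_body :: "'a::euclidean_space set \<Rightarrow> bool" where
  "cap_body K \<longleftrightarrow> (\<exists>c r V. r > 0 \<and> countable V \<and> V \<inter> cball c r = {} \<and>
     (\<forall>v\<in>V. \<forall>w\<in>V. v \<noteq> w \<longrightarrow> closed_segment v w \<inter> cball c r \<noteq> {}) \<and>
     K = convex hull (cball c r \<union> V))"

definition centrally_symmetric :: "'a::euclidean_space set \<Rightarrow> bool" where
  "centrally_symmetric K \<longleftrightarrow> (\<exists>x. \<forall>p\<in>K. 2 *\<^sub>R x - p \<in> K)"

definition illuminates :: "'a::euclidean_space set \<Rightarrow> 'a \<Rightarrow> 'a \<Rightarrow> bool" where
  "illuminates K u p \<longleftrightarrow> (\<exists>t>0. p + t *\<^sub>R u \<in> interior K)"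

definition illumination_number :: "'a::euclidean_space set \<Rightarrow> nat" where
  "illumination_number K = (LEAST n. \<exists>U. finite U \<and> card U = n \<and> U \<subseteq> sphere 0 1 \<and>
      (\<forall>p\<in>frontier K. \<exists>u\<in>U. illuminates K u p))"

end

theory Submission
  imports Defs
begin

text \<open>
  Scale so that the ball is the unit ball centred at \<open>0\<close>. A cap body that is symmetric about
  some point is symmetric about the centre of the ball (otherwise the directions of the open
  half-space towards the centre of symmetry would be covered by the disjoint open cones of
  directions in which single vertices stick out of the ball), so its set \<open>W\<close> of vertices satisfies
  \<open>-W = W\<close>; and two vertices \<open>v \<noteq> w\<close> see each other through the ball only if
  \<open>(v \<bullet> v - 1) (w \<bullet> w - 1) \<le> (1 - v \<bullet> w)\<^sup>2\<close>.

  A unit vector \<open>u\<close> with \<open>u \<bullet> w < 0\<close> illuminates the cap of the vertex \<open>w\<close> as soon as the line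
  through \<open>w\<close> in direction \<open>u\<close> meets the open ball, i.e. \<open>w \<bullet> w - 1 < (u \<bullet> w)\<^sup>2\<close>. So it suffices
  to find an orthonormal frame \<open>f\<^sub>1, f\<^sub>2, f\<^sub>3\<close> such that every \<open>w \<in> W\<close> satisfies this inequality for
  some \<open>f\<^sub>i\<close>; the six directions \<open>\<plusminus>f\<^sub>i\<close> then illuminate the whole boundary. By Parseval any frame
  works for vertices with \<open>w \<bullet> w < 3/2\<close>. Two long vertices that are not antipodal satisfy
  \<open>\<bar>v \<bullet> w\<bar> \<le> 1/2\<close>; taking \<open>f\<^sub>1\<close> along one long vertex and \<open>f\<^sub>2\<close> in the plane of a second one, every
  further long vertex is nearly orthogonal to that plane and is handled by \<open>f\<^sub>3\<close>.

  For sharpness, the ball of radius \<open>sqrt (1/2)\<close> together with the six vertices \<open>\<plusminus>e\<^sub>k\<close> forms a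
  symmetric cap body in which no direction illuminates two of the vertices.
\<close>

section \<open>Inner products and orthonormal frames\<close>

lemma segment_meets_unit_ball_inner_bounds:
  fixes v w :: "'a::real_inner"
  assumes v: "1 < v \<bullet> v" and w: "1 < w \<bullet> w"
    and meet: "closed_segment v w \<inter> cball 0 1 \<noteq> {}"
  shows "v \<bullet> w \<le> 1 \<and> (v \<bullet> v - 1) * (w \<bullet> w - 1) \<le> (1 - v \<bullet> w)^2"
proof -
  obtain t where t: "0 \<le> t" "t \<le> 1" and le: "norm ((1 - t) *\<^sub>R v + t *\<^sub>R w) \<le> 1"
    using meet by (auto simp: in_segment)
  define A where "A = v \<bullet> v - 1"
  define B where "B = w \<bullet> w - 1"
  define c where "c = v \<bullet> w"
  have A: "A > 0" and B: "B > 0" using v w by (auto simp: A_def B_def)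
  have "(norm ((1 - t) *\<^sub>R v + t *\<^sub>R w))^2 \<le> 1"
    using le by (simp add: power_le_one)
  also have "(norm ((1 - t) *\<^sub>R v + t *\<^sub>R w))^2 = (1 - t)^2 * (A + 1) + 2 * t * (1 - t) * c + t^2 * (B + 1)"
    unfolding power2_norm_eq_inner A_def B_def c_def
    by (simp add: inner_add_left inner_add_right power2_eq_square algebra_simps inner_commute)
  finally have key: "(1 - t)^2 * A + t^2 * B \<le> 2 * t * (1 - t) * (1 - c)"
    by (simp add: power2_eq_square algebra_simps)
  have "t \<noteq> 0" "t \<noteq> 1" using key A B by auto
  then have X: "(1 - t)^2 * A > 0" and Y: "t^2 * B > 0" and tt: "t * (1 - t) > 0"
    using A B t by auto
  have c: "c \<le> 1"
  proof (rule ccontr)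
    assume "\<not> c \<le> 1"
    then have "2 * t * (1 - t) * (1 - c) < 0" using tt by (simp add: mult_pos_neg)
    then show False using key X Y by linarith
  qed
  \<comment> \<open>AM-GM on the left-hand side of \<open>key\<close>\<close>
  have "4 * ((1 - t)^2 * A) * (t^2 * B) \<le> ((1 - t)^2 * A + t^2 * B)^2"
    using sum_squares_ge_zero[of "(1 - t)^2 * A - t^2 * B" 0]
    by (simp add: power2_eq_square algebra_simps)
  also have "\<dots> \<le> (2 * t * (1 - t) * (1 - c))^2"
    using key X Y by (intro power_mono) auto
  finally have "(t * (1 - t))^2 * (A * B) \<le> (t * (1 - t))^2 * (1 - c)^2"
    by (simp add: power2_eq_square algebra_simps)
  moreover have "0 < (t * (1 - t))^2" using tt by (simp add: power2_eq_square)
  ultimately have "A * B \<le> (1 - c)^2"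
    using mult_le_cancel_left_pos by blast
  then show ?thesis using c by (simp add: A_def B_def c_def)
qed

lemma sum_squares_lt_one_if_inner_small:
  fixes a b x y :: real
  assumes a: "a^2 \<le> 1/6" and x: "x^2 \<le> 1/6" and ab: "3/2 \<le> a^2 + b^2"
    and small: "\<bar>a * x + b * y\<bar> \<le> 1/2"
  shows "x^2 + y^2 < 1"
proof (rule ccontr)
  assume "\<not> ?thesis"
  then have "(4/3) * (5/6) \<le> b^2 * y^2"
    using a x ab by (intro mult_mono) auto
  then have "1^2 \<le> (b * y)^2" by (simp add: power_mult_distrib)
  then have by_ge: "1 \<le> \<bar>b * y\<bar>" using abs_le_square_iff[of 1 "b * y"] by simp
  have "a^2 * x^2 \<le> (1/6) * (1/6)"
    using a x by (intro mult_mono) auto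
  then have "(a * x)^2 \<le> (1/6)^2" by (simp add: power_mult_distrib power2_eq_square mult_ac)
  then have "\<bar>a * x\<bar> \<le> 1/6" using abs_le_square_iff[of "a * x" "1/6"] by simp
  then show False using by_ge small by linarith
qed

lemma sgn_inner_power2:
  fixes v w :: "'a::real_inner"
  shows "(sgn v \<bullet> w)^2 = (v \<bullet> w)^2 / (v \<bullet> v)"
proof -
  have "sgn v \<bullet> w = (v \<bullet> w) / norm v" by (simp add: sgn_div_norm divide_inverse mult.commute)
  then show ?thesis by (simp add: power_divide power2_norm_eq_inner)
qed

lemma sgn_crossing_antipodal:
  fixes v w :: "'a::real_inner"
  assumes "v \<noteq> 0" and "w = v \<or> w = - v"
  shows "w \<bullet> w - 1 < (sgn v \<bullet> w)^2"
proof -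
  have vw: "(v \<bullet> w)^2 = (v \<bullet> v)^2" and ww: "w \<bullet> w = v \<bullet> v" using assms(2) by auto
  have "(sgn v \<bullet> w)^2 = (v \<bullet> v)^2 / (v \<bullet> v)" by (simp only: sgn_inner_power2 vw)
  also have "\<dots> = v \<bullet> v" using assms(1) by (simp add: power2_eq_square)
  finally show ?thesis using ww by simp
qed

lemma crossing_if_parseval_small:
  fixes f1 f2 f3 w :: "'a::real_inner"
  assumes "(f1 \<bullet> w)^2 + (f2 \<bullet> w)^2 + (f3 \<bullet> w)^2 = w \<bullet> w" and "w \<bullet> w < 3/2"
  shows "\<exists>f\<in>{f1, f2, f3}. w \<bullet> w - 1 < (f \<bullet> w)^2"
  using assms by (auto simp: not_less)

lemma gram_schmidt_step:
  fixes f1 z :: "'a::real_inner"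
  assumes f1: "f1 \<bullet> f1 = 1" and z: "z \<noteq> (f1 \<bullet> z) *\<^sub>R f1"
  obtains f2 where "f2 \<bullet> f2 = 1" "f1 \<bullet> f2 = 0" "z = (f1 \<bullet> z) *\<^sub>R f1 + (f2 \<bullet> z) *\<^sub>R f2"
proof -
  define g where "g = z - (f1 \<bullet> z) *\<^sub>R f1"
  have g: "g \<noteq> 0" using z by (simp add: g_def)
  have f1g: "f1 \<bullet> g = 0" using f1 by (simp add: g_def inner_diff_right)
  have "sgn g \<bullet> sgn g = 1"
    using g by (simp add: norm_sgn power2_norm_eq_inner[symmetric])
  moreover have "f1 \<bullet> sgn g = 0" using f1g by (simp add: sgn_div_norm)
  moreover have "(sgn g \<bullet> z) *\<^sub>R sgn g = g"
  proof -
    have "sgn g \<bullet> z = sgn g \<bullet> g"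
      using f1g by (simp add: g_def sgn_div_norm inner_diff_right inner_commute)
    also have "\<dots> = norm g"
      using g by (simp add: sgn_div_norm power2_norm_eq_inner[symmetric] power2_eq_square)
    finally show ?thesis using g by (simp add: sgn_div_norm field_simps)
  qed
  then have "z = (f1 \<bullet> z) *\<^sub>R f1 + (sgn g \<bullet> z) *\<^sub>R sgn g" by (simp add: g_def)
  ultimately show thesis by (rule that)
qed

lemma exists_orthogonal_unit:
  fixes f :: "'a::euclidean_space"
  assumes "2 \<le> DIM('a)"
  obtains g where "g \<bullet> g = 1" "f \<bullet> g = 0"
proof -
  obtain y where "y \<noteq> 0" "orthogonal f y"
    using orthogonal_to_vector_exists[OF assms] by blast
  then have "sgn y \<bullet> sgn y = 1" "f \<bullet> sgn y = 0"
    by (simp_all add: orthogonal_def sgn_div_norm norm_sgn power2_norm_eq_inner[symmetric])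
  then show thesis by (rule that)
qed

lemma orthonormal_cross3_parseval:
  fixes f1 f2 y :: "real^3"
  assumes "f1 \<bullet> f1 = 1" "f2 \<bullet> f2 = 1" "f1 \<bullet> f2 = 0"
  shows "(f1 \<bullet> y)^2 + (f2 \<bullet> y)^2 + (cross3 f1 f2 \<bullet> y)^2 = y \<bullet> y"
  using assms unfolding cross3_def inner_vec_def sum_3 vector_def
  by simp algebra

lemma orthonormal_cross3_unit:
  fixes f1 f2 :: "real^3"
  assumes "f1 \<bullet> f1 = 1" "f2 \<bullet> f2 = 1" "f1 \<bullet> f2 = 0"
  shows "cross3 f1 f2 \<bullet> cross3 f1 f2 = 1"
  using norm_cross_dot[of f1 f2] assms
  by (simp add: power2_norm_eq_inner power_mult_distrib)

section \<open>Normalised vertex sets of symmetric cap bodies\<close>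

locale symmetric_cap_vertices =
  fixes W :: "'a::real_inner set"
  assumes one_less_norm: "w \<in> W \<Longrightarrow> 1 < norm w"
    and uminus_mem: "w \<in> W \<Longrightarrow> - w \<in> W"
    and segment_meets_ball: "\<lbrakk>v \<in> W; w \<in> W; v \<noteq> w\<rbrakk> \<Longrightarrow> closed_segment v w \<inter> cball 0 1 \<noteq> {}"
begin

lemma one_less_inner_self: "w \<in> W \<Longrightarrow> 1 < w \<bullet> w"
  using one_less_norm[of w] by (metis less_1_mult norm_ge_zero power2_eq_square power2_norm_eq_inner)

lemma inner_bounds:
  "\<lbrakk>v \<in> W; w \<in> W; v \<noteq> w\<rbrakk> \<Longrightarrow> v \<bullet> w \<le> 1 \<and> (v \<bullet> v - 1) * (w \<bullet> w - 1) \<le> (1 - v \<bullet> w)^2"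
  using segment_meets_unit_ball_inner_bounds one_less_inner_self segment_meets_ball by blast

lemma abs_inner_le_half:
  assumes v: "v \<in> W" "3/2 \<le> v \<bullet> v" and w: "w \<in> W" "3/2 \<le> w \<bullet> w"
    and "w \<noteq> v" "w \<noteq> - v"
  shows "\<bar>v \<bullet> w\<bar> \<le> 1/2"
proof -
  have half_le: "1/2 \<le> x" if "0 \<le> x" "(v \<bullet> v - 1) * (w \<bullet> w - 1) \<le> x^2" for x :: real
  proof -
    have "(1/2)^2 \<le> (v \<bullet> v - 1) * (w \<bullet> w - 1)"
      using v w mult_mono[of "1/2" "v \<bullet> v - 1" "1/2" "w \<bullet> w - 1"] by (simp add: power2_eq_square)
    then have "(1/2)^2 \<le> x^2" using that(2) by linarith
    then show ?thesis using power2_le_imp_le that(1) by blast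
  qed
  have "v \<noteq> - w" using \<open>w \<noteq> - v\<close> by (metis minus_minus)
  then have "v \<bullet> -w \<le> 1" "(v \<bullet> v - 1) * (-w \<bullet> -w - 1) \<le> (1 - v \<bullet> -w)^2"
    using inner_bounds[OF v(1) uminus_mem[OF w(1)]] by auto
  moreover have "v \<bullet> w \<le> 1" "(v \<bullet> v - 1) * (w \<bullet> w - 1) \<le> (1 - v \<bullet> w)^2"
    using inner_bounds[OF v(1) w(1)] assms by auto
  ultimately have "1/2 \<le> 1 - v \<bullet> w" "1/2 \<le> 1 + v \<bullet> w"
    using half_le[of "1 - v \<bullet> w"] half_le[of "1 + v \<bullet> w"] by auto
  then show ?thesis by linarith
qed

lemma norm_le_inner_self: "w \<in> W \<Longrightarrow> norm w \<le> w \<bullet> w"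
  using one_less_norm[of w] mult_left_mono[of 1 "norm w" "norm w"]
  by (simp add: power2_norm_eq_inner[symmetric] power2_eq_square)

lemma bounded: "bounded W"
proof (cases "\<exists>w0\<in>W. 3 < w0 \<bullet> w0")
  case False
  then have "\<forall>w\<in>W. norm w \<le> 3"
    using norm_le_inner_self by (meson not_less order.trans)
  then show ?thesis unfolding bounded_iff by blast
next
  case True
  then obtain w0 where w0: "w0 \<in> W" "3 < w0 \<bullet> w0" by blast
  \<comment> \<open>two far vectors that are not antipodal would give \<open>2 * 2 < (1 - w0 \<bullet> w)^2 \<le> (3/2)^2\<close>\<close>
  have "w \<bullet> w \<le> w0 \<bullet> w0" if w: "w \<in> W" for w
  proof (rule ccontr)
    assume "\<not> w \<bullet> w \<le> w0 \<bullet> w0"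
    then have far: "3 < w \<bullet> w" "w \<noteq> w0" "w \<noteq> - w0" using w0 by auto
    have "\<bar>w0 \<bullet> w\<bar> \<le> 1/2"
      using abs_inner_le_half[OF w0(1) _ w _ far(2,3)] w0(2) far(1) by linarith
    then have "\<bar>1 - w0 \<bullet> w\<bar> \<le> \<bar>3/2\<bar>" by linarith
    then have "(1 - w0 \<bullet> w)^2 \<le> 9/4" unfolding abs_le_square_iff by (simp add: power_divide)
    moreover have "2 * 2 < (w0 \<bullet> w0 - 1) * (w \<bullet> w - 1)"
      using w0 far by (intro mult_strict_mono) auto
    moreover have "(w0 \<bullet> w0 - 1) * (w \<bullet> w - 1) \<le> (1 - w0 \<bullet> w)^2"
      using inner_bounds[OF w0(1) w] far(2) by metis
    ultimately show False by linarith
  qed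
  then have "\<forall>w\<in>W. norm w \<le> w0 \<bullet> w0"
    using norm_le_inner_self order.trans by blast
  then show ?thesis unfolding bounded_iff by blast
qed

lemma sgn_inner_power2_le_sixth:
  assumes v: "v \<in> W" "3/2 \<le> v \<bullet> v" and w: "w \<in> W" "3/2 \<le> w \<bullet> w"
    and "w \<noteq> v" "w \<noteq> - v"
  shows "(sgn v \<bullet> w)^2 \<le> 1/6"
proof -
  have "\<bar>v \<bullet> w\<bar> \<le> 1/2" using abs_inner_le_half assms by blast
  then have "(v \<bullet> w)^2 \<le> 1/4"
    using abs_le_square_iff[of "v \<bullet> w" "1/2"] by (simp add: power_divide)
  then have "(v \<bullet> w)^2 / (v \<bullet> v) \<le> (1/4) / (3/2)"
    using v(2) by (intro frac_le) auto
  then show ?thesis by (simp add: sgn_inner_power2)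
qed

lemma crossing_one_far:
  assumes far_eq: "\<And>w. \<lbrakk>w \<in> W; 3/2 \<le> w \<bullet> w\<rbrakk> \<Longrightarrow> w = v \<or> w = - v"
    and parseval: "\<And>y. (sgn v \<bullet> y)^2 + (f2 \<bullet> y)^2 + (f3 \<bullet> y)^2 = y \<bullet> y"
    and w: "w \<in> W"
  shows "\<exists>f\<in>{sgn v, f2, f3}. w \<bullet> w - 1 < (f \<bullet> w)^2"
proof (cases "w \<bullet> w < 3/2")
  case True
  then show ?thesis using crossing_if_parseval_small parseval by blast
next
  case False
  then have "w = v \<or> w = - v" using far_eq w by simp
  moreover have "w \<noteq> 0" using one_less_norm[OF w] by auto
  ultimately show ?thesis using sgn_crossing_antipodal by fastforce
qed

lemma far_not_parallel:
  assumes v1: "v1 \<in> W" "3/2 \<le> v1 \<bullet> v1" and v2: "v2 \<in> W" "3/2 \<le> v2 \<bullet> v2" "v2 \<noteq> v1" "v2 \<noteq> - v1"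
  shows "v2 \<noteq> (sgn v1 \<bullet> v2) *\<^sub>R sgn v1"
proof
  assume parallel: "v2 = (sgn v1 \<bullet> v2) *\<^sub>R sgn v1"
  have "v1 \<noteq> 0" using one_less_norm[OF v1(1)] by auto
  then have "sgn v1 \<bullet> sgn v1 = 1" by (simp add: norm_sgn power2_norm_eq_inner[symmetric])
  then have "v2 \<bullet> v2 = (sgn v1 \<bullet> v2)^2"
    using parallel by (metis inner_scaleR_left inner_scaleR_right power2_eq_square mult.right_neutral)
  then show False using sgn_inner_power2_le_sixth[OF assms] v2(2) by linarith
qed

lemma crossing_two_far:
  assumes v1: "v1 \<in> W" "3/2 \<le> v1 \<bullet> v1" and v2: "v2 \<in> W" "3/2 \<le> v2 \<bullet> v2" "v2 \<noteq> v1" "v2 \<noteq> - v1"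
    and f2: "f2 \<bullet> f2 = 1" "sgn v1 \<bullet> f2 = 0" "v2 = (sgn v1 \<bullet> v2) *\<^sub>R sgn v1 + (f2 \<bullet> v2) *\<^sub>R f2"
    and parseval: "\<And>y. (sgn v1 \<bullet> y)^2 + (f2 \<bullet> y)^2 + (f3 \<bullet> y)^2 = y \<bullet> y"
    and w: "w \<in> W"
  shows "\<exists>f\<in>{sgn v1, f2, f3}. w \<bullet> w - 1 < (f \<bullet> w)^2"
proof -
  define f1 where "f1 = sgn v1"
  have a: "(f1 \<bullet> v2)^2 \<le> 1/6"
    unfolding f1_def using sgn_inner_power2_le_sixth[OF v1 v2] by blast
  have "v2 \<bullet> v2 = ((f1 \<bullet> v2) *\<^sub>R f1 + (f2 \<bullet> v2) *\<^sub>R f2) \<bullet> v2"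
    using f2(3) unfolding f1_def by (metis (no_types))
  then have ab: "(f1 \<bullet> v2)^2 + (f2 \<bullet> v2)^2 = v2 \<bullet> v2"
    by (simp add: inner_add_left power2_eq_square)
  show ?thesis
  proof (cases "w \<bullet> w < 3/2 \<or> w = v1 \<or> w = - v1 \<or> w = v2 \<or> w = - v2")
    case True
    moreover have "v1 \<noteq> 0" using one_less_norm[OF v1(1)] by auto
    moreover have "w \<bullet> w - 1 < (f2 \<bullet> w)^2" if "w = v2 \<or> w = - v2"
      using that ab a by auto
    ultimately show ?thesis
      using crossing_if_parseval_small[OF parseval] sgn_crossing_antipodal by blast
  next
    case False
    \<comment> \<open>a third far vector is almost orthogonal to the plane of \<open>v1\<close> and \<open>v2\<close>\<close>
    have "(f1 \<bullet> w)^2 + (f2 \<bullet> w)^2 < 1"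
    proof (rule sum_squares_lt_one_if_inner_small)
      show "(f1 \<bullet> v2)^2 \<le> 1/6" by (fact a)
      show "(f1 \<bullet> w)^2 \<le> 1/6"
        unfolding f1_def using sgn_inner_power2_le_sixth[OF v1 w] False by auto
      show "3/2 \<le> (f1 \<bullet> v2)^2 + (f2 \<bullet> v2)^2" using ab v2(2) by simp
      have "v2 \<bullet> w = (f1 \<bullet> v2) * (f1 \<bullet> w) + (f2 \<bullet> v2) * (f2 \<bullet> w)"
        by (subst f2(3)) (simp add: f1_def inner_add_left)
      moreover have "\<bar>v2 \<bullet> w\<bar> \<le> 1/2"
        using abs_inner_le_half[OF v2(1,2) w] False by auto
      ultimately show "\<bar>(f1 \<bullet> v2) * (f1 \<bullet> w) + (f2 \<bullet> v2) * (f2 \<bullet> w)\<bar> \<le> 1/2" by simp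
    qed
    then have "w \<bullet> w - 1 < (f3 \<bullet> w)^2" using parseval[of w] unfolding f1_def by linarith
    then show ?thesis by blast
  qed
qed

end

lemma exists_crossing_frame:
  fixes W :: "(real^3) set"
  assumes "symmetric_cap_vertices W"
  obtains f1 f2 where "f1 \<bullet> f1 = 1" "f2 \<bullet> f2 = 1" "f1 \<bullet> f2 = 0"
    "\<And>w. w \<in> W \<Longrightarrow> \<exists>f\<in>{f1, f2, cross3 f1 f2}. w \<bullet> w - 1 < (f \<bullet> w)^2"
proof -
  interpret symmetric_cap_vertices W by fact
  have sgn_unit: "sgn v \<bullet> sgn v = 1" if "v \<noteq> 0" for v :: "real^3"
    using that by (simp add: norm_sgn power2_norm_eq_inner[symmetric])
  consider (one_far) v where "v \<noteq> 0" "\<And>w. \<lbrakk>w \<in> W; 3/2 \<le> w \<bullet> w\<rbrakk> \<Longrightarrow> w = v \<or> w = - v"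
    | (two_far) v1 v2 where "v1 \<in> W" "3/2 \<le> v1 \<bullet> v1" "v2 \<in> W" "3/2 \<le> v2 \<bullet> v2"
        "v2 \<noteq> v1" "v2 \<noteq> - v1"
  proof (cases "\<exists>v\<in>W. 3/2 \<le> v \<bullet> v")
    case True
    then obtain v where v: "v \<in> W" "3/2 \<le> v \<bullet> v" by blast
    show thesis
    proof (cases "\<exists>w\<in>W. 3/2 \<le> w \<bullet> w \<and> w \<noteq> v \<and> w \<noteq> - v")
      case True
      then show thesis using that(2) v by blast
    next
      case False
      moreover have "v \<noteq> 0" using one_less_norm[OF v(1)] by auto
      ultimately show thesis using that(1)[of v] by blast
    qed
  next
    case False
    then show thesis using that(1)[of "axis 1 1"] by (auto simp: axis_eq_0_iff)
  qed
  then show thesis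
  proof cases
    case one_far
    obtain f2 where f2: "f2 \<bullet> f2 = 1" "sgn v \<bullet> f2 = 0" using exists_orthogonal_unit[of "sgn v"] by auto
    show thesis
      using that[OF sgn_unit[OF one_far(1)] f2]
        crossing_one_far[OF one_far(2) orthonormal_cross3_parseval[OF sgn_unit[OF one_far(1)] f2]]
      by blast
  next
    case two_far
    have "v1 \<noteq> 0" using one_less_norm[OF two_far(1)] by auto
    then obtain f2 where f2: "f2 \<bullet> f2 = 1" "sgn v1 \<bullet> f2 = 0"
        "v2 = (sgn v1 \<bullet> v2) *\<^sub>R sgn v1 + (f2 \<bullet> v2) *\<^sub>R f2"
      using gram_schmidt_step[OF sgn_unit far_not_parallel[OF two_far]] by blast
    show thesis
      using that[OF sgn_unit[OF \<open>v1 \<noteq> 0\<close>] f2(1,2)]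
        crossing_two_far[OF two_far f2 orthonormal_cross3_parseval[OF sgn_unit[OF \<open>v1 \<noteq> 0\<close>] f2(1,2)]]
      by blast
  qed
qed

section \<open>Cap bodies of a ball\<close>

lemma inner_le_of_mem_cball:
  fixes c y n :: "'a::real_inner"
  assumes "y \<in> cball c r"
  shows "n \<bullet> (y - c) \<le> r * norm n"
proof -
  have "n \<bullet> (y - c) \<le> norm n * norm (y - c)" by (rule norm_cauchy_schwarz)
  also have "\<dots> \<le> norm n * r"
    using assms by (intro mult_left_mono) (auto simp: dist_norm norm_minus_commute)
  finally show ?thesis by (simp add: mult.commute)
qed

lemma line_meets_ball:
  fixes u q :: "'a::real_inner"
  assumes "u \<bullet> u = 1" "0 \<le> r" "q \<bullet> q - r^2 < (u \<bullet> q)^2"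
  shows "q - (u \<bullet> q) *\<^sub>R u \<in> ball 0 r"
proof -
  have "(norm (q - (u \<bullet> q) *\<^sub>R u))^2 = (q - (u \<bullet> q) *\<^sub>R u) \<bullet> (q - (u \<bullet> q) *\<^sub>R u)"
    by (rule power2_norm_eq_inner)
  also have "\<dots> = q \<bullet> q - (u \<bullet> q)^2"
    using assms(1) by (simp add: inner_diff_left inner_diff_right inner_commute power2_eq_square)
  also have "\<dots> < r^2" using assms(3) by linarith
  finally show ?thesis using assms(2) by (simp add: power_less_imp_less_base)
qed

lemma convex_combination_3_mem:
  assumes "convex S" "a \<in> S" "b \<in> S" "d \<in> S" "0 \<le> \<alpha>" "0 \<le> \<beta>" "0 \<le> \<gamma>" "\<alpha> + \<beta> + \<gamma> = 1"
  shows "\<alpha> *\<^sub>R a + \<beta> *\<^sub>R b + \<gamma> *\<^sub>R d \<in> S"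
proof -
  have "convex hull {a, b, d} \<subseteq> S" using assms by (intro hull_minimal) auto
  moreover have "\<alpha> *\<^sub>R a + \<beta> *\<^sub>R b + \<gamma> *\<^sub>R d \<in> convex hull {a, b, d}"
    unfolding convex_hull_3 using assms by blast
  ultimately show ?thesis by blast
qed

lemma convex_scaled_sum:
  assumes "convex S" "x \<in> S" "y \<in> S" "0 \<le> p" "0 \<le> q"
  obtains z where "z \<in> S" "p *\<^sub>R x + q *\<^sub>R y = (p + q) *\<^sub>R z"
proof (cases "p + q = 0")
  case True
  then have "p = 0" "q = 0" using assms by linarith+
  then show thesis using that[of x] assms by simp
next
  case False
  then have pq: "0 < p + q" using assms by linarith
  define z where "z = (p / (p + q)) *\<^sub>R x + (q / (p + q)) *\<^sub>R y"
  have "z \<in> S"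
    unfolding z_def using assms pq by (intro convexD) (auto simp: add_divide_distrib[symmetric])
  moreover have "p *\<^sub>R x + q *\<^sub>R y = (p + q) *\<^sub>R z"
    using pq by (simp add: z_def scaleR_add_right)
  ultimately show thesis by (rule that)
qed

lemma exists_direction_not_protruding:
  fixes d h :: "'a::euclidean_space"
  assumes "2 \<le> DIM('a)" "d \<noteq> 0" "0 < r"
  obtains n where "0 < d \<bullet> n" "n \<bullet> h \<le> r * norm n"
proof -
  obtain m0 where m0: "m0 \<noteq> 0" "orthogonal d m0"
    using orthogonal_to_vector_exists[OF assms(1)] by blast
  define m where "m = (if m0 \<bullet> h \<le> 0 then m0 else - m0)"
  have m: "m \<noteq> 0" "d \<bullet> m = 0" "m \<bullet> h \<le> 0"
    using m0 by (auto simp: m_def orthogonal_def)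
  \<comment> \<open>tilting \<open>d\<close> far enough towards \<open>m\<close> keeps the sign of \<open>d \<bullet> n\<close> but makes \<open>n \<bullet> h\<close> small\<close>
  define T where "T = (\<bar>d \<bullet> h\<bar> + 1) / (r * norm m)"
  have T: "0 \<le> T" "r * (T * norm m) = \<bar>d \<bullet> h\<bar> + 1"
    using assms(3) m(1) by (auto simp: T_def)
  define n where "n = d + T *\<^sub>R m"
  have "0 < d \<bullet> n" using assms(2) m(2) by (simp add: n_def inner_add_right)
  moreover have "n \<bullet> h \<le> r * norm n"
  proof -
    have "n \<bullet> n = d \<bullet> d + T^2 * (m \<bullet> m)"
      using m(2) by (simp add: n_def inner_add_left inner_add_right inner_commute power2_eq_square)
    moreover have "(T * norm m)^2 = T^2 * (m \<bullet> m)"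
      by (simp add: power_mult_distrib power2_norm_eq_inner)
    moreover have "(norm n)^2 = n \<bullet> n" by (rule power2_norm_eq_inner)
    ultimately have "(T * norm m)^2 \<le> (norm n)^2" by simp
    then have Tn: "T * norm m \<le> norm n" using power2_le_imp_le norm_ge_zero by metis
    have "n \<bullet> h \<le> d \<bullet> h"
      using T(1) m(3) by (simp add: n_def inner_add_left mult_nonneg_nonpos)
    also have "\<dots> < r * (T * norm m)" using T(2) by linarith
    also have "\<dots> \<le> r * norm n" using Tn assms(3) by simp
    finally show ?thesis by simp
  qed
  ultimately show thesis by (rule that)
qed

locale ball_cap_body =
  fixes c :: "'a::euclidean_space" and r :: real and V :: "'a set" and K :: "'a set"
  assumes radius_pos: "0 < r"
    and vertices_outside: "V \<inter> cball c r = {}"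
    and segment_meets_ball: "\<lbrakk>v \<in> V; w \<in> V; v \<noteq> w\<rbrakk> \<Longrightarrow> closed_segment v w \<inter> cball c r \<noteq> {}"
    and K_eq: "K = convex hull (cball c r \<union> V)"
begin

lemma radius_lt_norm: "v \<in> V \<Longrightarrow> r < norm (v - c)"
  using vertices_outside by (auto simp: dist_norm norm_minus_commute)

lemma cball_subset: "cball c r \<subseteq> K" and vertices_subset: "V \<subseteq> K"
  unfolding K_eq by (auto intro: hull_inc)

lemma ball_subset_interior: "ball c r \<subseteq> interior K"
  using cball_subset by (intro interior_maximal) auto

definition scale :: "'a \<Rightarrow> 'a" where
  "scale y = (1 / r) *\<^sub>R (y - c)"

lemma norm_scale: "norm (scale y) = norm (y - c) / r"
  using radius_pos by (simp add: scale_def)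

lemma one_less_norm_scale: "v \<in> V \<Longrightarrow> 1 < norm (scale v)"
  using radius_lt_norm radius_pos by (simp add: norm_scale)

lemma scale_segment_meets_unit_ball:
  assumes "v \<in> V" "w \<in> V" "v \<noteq> w"
  shows "closed_segment (scale v) (scale w) \<inter> cball 0 1 \<noteq> {}"
proof -
  obtain y where "y \<in> closed_segment v w" "y \<in> cball c r"
    using segment_meets_ball[OF assms] by blast
  then obtain t where y: "y \<in> cball c r" "0 \<le> t" "t \<le> 1" "y = (1 - t) *\<^sub>R v + t *\<^sub>R w"
    by (auto simp: in_segment)
  have "y - c = (1 - t) *\<^sub>R (v - c) + t *\<^sub>R (w - c)"
    using y(4) by (simp add: algebra_simps)
  then have "scale y = (1 - t) *\<^sub>R scale v + t *\<^sub>R scale w"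
    by (simp add: scale_def scaleR_add_right)
  then have "scale y \<in> closed_segment (scale v) (scale w)"
    using y(2,3) by (auto simp: in_segment)
  moreover have "norm (scale y) \<le> 1"
    using y(1) radius_pos by (simp add: norm_scale dist_norm norm_minus_commute)
  ultimately show ?thesis by auto
qed

lemma crossing_scale_iff:
  "scale v \<bullet> scale v - 1 < (f \<bullet> scale v)^2 \<longleftrightarrow> (v - c) \<bullet> (v - c) - r^2 < (f \<bullet> (v - c))^2"
proof -
  have "scale v \<bullet> scale v = ((v - c) \<bullet> (v - c)) / r^2"
    unfolding scale_def inner_scaleR_left inner_scaleR_right by (simp add: power2_eq_square)
  then have "scale v \<bullet> scale v - 1 = ((v - c) \<bullet> (v - c) - r^2) / r^2"
    using radius_pos by (simp add: diff_divide_distrib)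
  moreover have "(f \<bullet> scale v)^2 = (f \<bullet> (v - c))^2 / r^2"
    unfolding scale_def inner_scaleR_right by (simp add: power_divide)
  ultimately show ?thesis using radius_pos by (simp add: divide_less_cancel)
qed

lemma inner_vertices_le:
  assumes "v \<in> V" "w \<in> V" "v \<noteq> w"
  shows "(v - c) \<bullet> (w - c) \<le> r^2"
proof -
  have "1 < scale v \<bullet> scale v" "1 < scale w \<bullet> scale w"
    using one_less_norm_scale assms
    by (metis less_1_mult norm_ge_zero power2_eq_square power2_norm_eq_inner)+
  then have "scale v \<bullet> scale w \<le> 1"
    using segment_meets_unit_ball_inner_bounds scale_segment_meets_unit_ball[OF assms] by blast
  moreover have "scale v \<bullet> scale w = ((v - c) \<bullet> (w - c)) / r^2"
    unfolding scale_def inner_scaleR_left inner_scaleR_right by (simp add: power2_eq_square)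
  ultimately show ?thesis
    using radius_pos by (simp add: divide_le_eq)
qed

lemma convex_hull_other_generators_le:
  assumes v: "v \<in> V"
  shows "convex hull (cball c r \<union> (V - {v})) \<subseteq> {z. (v - c) \<bullet> z \<le> (v - c) \<bullet> c + r * norm (v - c)}"
proof (intro hull_minimal subsetI)
  fix z assume z: "z \<in> cball c r \<union> (V - {v})"
  have "(v - c) \<bullet> (z - c) \<le> r * norm (v - c)"
  proof (cases "z \<in> cball c r")
    case True
    then show ?thesis by (rule inner_le_of_mem_cball)
  next
    case False
    then have "(v - c) \<bullet> (z - c) \<le> r^2" using inner_vertices_le[of v z] v z by auto
    also have "r^2 \<le> r * norm (v - c)"
      using radius_lt_norm[OF v] radius_pos by (simp add: power2_eq_square)
    finally show ?thesis .
  qed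
  then show "z \<in> {z. (v - c) \<bullet> z \<le> (v - c) \<bullet> c + r * norm (v - c)}" by (simp add: inner_diff_right)
qed (simp add: convex_halfspace_le)

lemma vertex_exposed:
  assumes v: "v \<in> V" and y: "y \<in> K" "y \<noteq> v"
  shows "(v - c) \<bullet> (y - c) < (v - c) \<bullet> (v - c)"
proof -
  define h where "h = v - c"
  let ?S = "cball c r \<union> (V - {v})"
  have "insert v ?S = cball c r \<union> V" using v by blast
  then have "K = convex hull (insert v ?S)" by (simp add: K_eq)
  moreover have "?S \<noteq> {}" using radius_pos by auto
  ultimately have "y \<in> (\<Union>z\<in>convex hull ?S. closed_segment v z)"
    using y(1) convex_hull_insert_segments[of v ?S] by argo
  then obtain z t where z: "z \<in> convex hull ?S" and t: "0 \<le> t" "t \<le> 1" "y = (1 - t) *\<^sub>R v + t *\<^sub>R z"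
    by (auto simp: in_segment)
  have "t \<noteq> 0" using t(3) y(2) by auto
  have "r * norm h < norm h * norm h"
    using radius_lt_norm[OF v] radius_pos by (intro mult_strict_right_mono) (auto simp: h_def)
  then have "h \<bullet> (z - c) < h \<bullet> h"
    using convex_hull_other_generators_le[OF v] z
    by (auto simp: h_def inner_diff_right dot_square_norm power2_eq_square)
  then have "t * (h \<bullet> (z - c)) < t * (h \<bullet> h)"
    using t(1) \<open>t \<noteq> 0\<close> by (intro mult_strict_left_mono) auto
  moreover have "y - c = (1 - t) *\<^sub>R h + t *\<^sub>R (z - c)"
    using t(3) by (simp add: h_def algebra_simps)
  then have "h \<bullet> (y - c) = (1 - t) * (h \<bullet> h) + t * (h \<bullet> (z - c))"
    by (simp add: inner_add_right)
  ultimately show ?thesis by (simp add: h_def algebra_simps)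
qed

definition cap :: "'a \<Rightarrow> 'a set" where
  "cap v = convex hull (insert v (cball c r))"

lemma cap_eq_segments: "cap v = (\<Union>b\<in>cball c r. closed_segment v b)"
proof -
  have "convex hull cball c r = cball c r" by (simp add: convex_hull_eq)
  then show ?thesis using radius_pos by (simp add: cap_def convex_hull_insert_segments)
qed

lemma convex_cap: "convex (cap v)" and cball_subset_cap: "cball c r \<subseteq> cap v"
  and mem_cap: "v \<in> cap v"
  unfolding cap_def by (auto intro: hull_inc)

lemma combination_in_cap:
  assumes m: "m = (1 - s) *\<^sub>R v + s *\<^sub>R w" "m \<in> cball c r" "0 < s" and b: "b \<in> cball c r"
    and coeffs: "0 \<le> \<alpha>" "0 \<le> \<beta>" "0 \<le> \<gamma>" "\<alpha> + \<beta> + \<gamma> = 1" "\<beta> * (1 - s) \<le> \<alpha> * s"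
  shows "\<alpha> *\<^sub>R v + \<beta> *\<^sub>R w + \<gamma> *\<^sub>R b \<in> cap v"
proof -
  define a where "a = \<alpha> - \<beta> * (1 - s) / s"
  have a: "0 \<le> a" using coeffs(5) m(3) by (simp add: a_def pos_divide_le_eq)
  have "0 \<le> \<beta> / s" using coeffs(2) m(3) by simp
  moreover have "a + \<beta> / s + \<gamma> = 1"
  proof -
    have "\<beta> / s - \<beta> * (1 - s) / s = \<beta> * s / s"
      by (simp add: diff_divide_distrib[symmetric] algebra_simps)
    then show ?thesis using coeffs(4) m(3) by (simp add: a_def)
  qed
  ultimately have "a *\<^sub>R v + (\<beta> / s) *\<^sub>R m + \<gamma> *\<^sub>R b \<in> cap v"
    using convex_combination_3_mem[OF convex_cap mem_cap _ _ a] cball_subset_cap m(2) b coeffs(3)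
    by blast
  moreover have "(\<beta> / s) *\<^sub>R m = (\<beta> * (1 - s) / s) *\<^sub>R v + \<beta> *\<^sub>R w"
    using m(1,3) by (simp add: scaleR_add_right)
  ultimately show ?thesis by (simp add: a_def algebra_simps)
qed

lemma two_vertex_combination_in_caps:
  assumes v: "v \<in> V" and w: "w \<in> V" "v \<noteq> w" and b: "b \<in> cball c r"
    and coeffs: "0 \<le> \<alpha>" "0 \<le> \<beta>" "0 \<le> \<gamma>" "\<alpha> + \<beta> + \<gamma> = 1"
  shows "\<alpha> *\<^sub>R v + \<beta> *\<^sub>R w + \<gamma> *\<^sub>R b \<in> cap v \<union> cap w"
proof -
  \<comment> \<open>a point \<open>m\<close> of the segment from \<open>v\<close> to \<open>w\<close> inside the ball cuts the triangle \<open>v w b\<close>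
      into the triangles \<open>v m b\<close> and \<open>w m b\<close>\<close>
  obtain m where "m \<in> closed_segment v w" and m: "m \<in> cball c r"
    using segment_meets_ball[OF v w] by blast
  then obtain s where s: "0 \<le> s" "s \<le> 1" "m = (1 - s) *\<^sub>R v + s *\<^sub>R w"
    by (auto simp: in_segment)
  have "s \<noteq> 0" "s \<noteq> 1" using s m v w(1) vertices_outside by auto
  then have s_pos: "0 < s" "0 < 1 - s" using s by auto
  show ?thesis
  proof (cases "\<beta> * (1 - s) \<le> \<alpha> * s")
    case True
    then show ?thesis using combination_in_cap[OF s(3) m s_pos(1) b coeffs] by blast
  next
    case False
    have "m = (1 - (1 - s)) *\<^sub>R w + (1 - s) *\<^sub>R v" using s(3) by simp
    moreover have "\<alpha> * (1 - (1 - s)) \<le> \<beta> * (1 - s)" using False by simp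
    ultimately have "\<beta> *\<^sub>R w + \<alpha> *\<^sub>R v + \<gamma> *\<^sub>R b \<in> cap w"
      using combination_in_cap[OF _ m s_pos(2) b coeffs(2,1,3)] coeffs(4) by simp
    then show ?thesis by (simp add: add.commute)
  qed
qed

lemma cap_combination_in_caps:
  assumes v: "v \<in> V" and w: "w \<in> V" "v \<noteq> w" and y: "y1 \<in> cap v" "y2 \<in> cap w"
    and u: "0 \<le> u" "0 \<le> u'" "u + u' = 1"
  shows "u *\<^sub>R y1 + u' *\<^sub>R y2 \<in> cap v \<union> cap w"
proof -
  obtain b1 m1 where b1: "b1 \<in> cball c r" "0 \<le> m1" "m1 \<le> 1" "y1 = (1 - m1) *\<^sub>R v + m1 *\<^sub>R b1"
    using y(1) by (auto simp: cap_eq_segments in_segment)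
  obtain b2 m2 where b2: "b2 \<in> cball c r" "0 \<le> m2" "m2 \<le> 1" "y2 = (1 - m2) *\<^sub>R w + m2 *\<^sub>R b2"
    using y(2) by (auto simp: cap_eq_segments in_segment)
  obtain b where b: "b \<in> cball c r"
    and ball_part: "(u * m1) *\<^sub>R b1 + (u' * m2) *\<^sub>R b2 = (u * m1 + u' * m2) *\<^sub>R b"
    using convex_scaled_sum[OF convex_cball b1(1) b2(1)] u b1(2) b2(2) by (metis mult_nonneg_nonneg)
  have "u *\<^sub>R y1 + u' *\<^sub>R y2 = (u * (1 - m1)) *\<^sub>R v + (u' * (1 - m2)) *\<^sub>R w + (u * m1 + u' * m2) *\<^sub>R b"
    unfolding b1(4) b2(4) ball_part[symmetric] by (simp add: algebra_simps)
  moreover have "\<dots> \<in> cap v \<union> cap w"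
  proof (rule two_vertex_combination_in_caps[OF v w b])
    show "0 \<le> u * (1 - m1)" "0 \<le> u' * (1 - m2)" "0 \<le> u * m1 + u' * m2"
      using u b1 b2 by auto
    show "u * (1 - m1) + u' * (1 - m2) + (u * m1 + u' * m2) = 1"
      using u(3) by (simp add: algebra_simps)
  qed
  ultimately show ?thesis by simp
qed

lemma convex_caps_union: "convex (cball c r \<union> (\<Union>v\<in>V. cap v))"
proof (rule convexI)
  fix y1 y2 :: 'a and u u' :: real
  assume y: "y1 \<in> cball c r \<union> (\<Union>v\<in>V. cap v)" "y2 \<in> cball c r \<union> (\<Union>v\<in>V. cap v)"
    and u: "0 \<le> u" "0 \<le> u'" "u + u' = 1"
  have cap_convexD: "u *\<^sub>R y1 + u' *\<^sub>R y2 \<in> cap v" if "y1 \<in> cap v" "y2 \<in> cap v" for v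
    using convexD[OF convex_cap that u] .
  consider "y1 \<in> cball c r" "y2 \<in> cball c r"
    | v where "v \<in> V" "y1 \<in> cap v" "y2 \<in> cap v"
    | v w where "v \<in> V" "w \<in> V" "v \<noteq> w" "y1 \<in> cap v" "y2 \<in> cap w"
    using y cball_subset_cap by blast
  then show "u *\<^sub>R y1 + u' *\<^sub>R y2 \<in> cball c r \<union> (\<Union>v\<in>V. cap v)"
  proof cases
    case 1
    then show ?thesis using convexD[OF convex_cball _ _ u] by blast
  next
    case 2
    then show ?thesis using cap_convexD by blast
  next
    case 3
    then show ?thesis using cap_combination_in_caps[OF 3 u] by blast
  qed
qed

lemma mem_cap_if_outside_cball:
  assumes "p \<in> K" "p \<notin> cball c r"
  obtains v b where "v \<in> V" "b \<in> cball c r" "p \<in> closed_segment v b"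
proof -
  have "K \<subseteq> cball c r \<union> (\<Union>v\<in>V. cap v)"
    unfolding K_eq using convex_caps_union mem_cap by (intro hull_minimal) auto
  then show thesis using assms that by (auto simp: cap_eq_segments)
qed

lemma boundary_point_cases:
  assumes "p \<in> K" "p \<notin> interior K"
  obtains "dist c p = r" | v b where "v \<in> V" "b \<in> cball c r" "p \<in> closed_segment v b" "p \<noteq> b"
proof -
  have "r \<le> dist c p" using assms(2) ball_subset_interior by (auto simp: not_less)
  then consider "dist c p = r" | "p \<notin> cball c r" by fastforce
  then show thesis
  proof cases
    case 2
    then obtain v b where "v \<in> V" "b \<in> cball c r" "p \<in> closed_segment v b"
      using mem_cap_if_outside_cball[OF assms(1)] by blast
    moreover have "p \<noteq> b" using 2 \<open>b \<in> cball c r\<close> by blast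
    ultimately show thesis using that(2) by blast
  qed (use that(1) in blast)
qed

lemma closure_vertices_subset: "closure V \<subseteq> V \<union> cball c r"
proof
  fix x assume x: "x \<in> closure V"
  show "x \<in> V \<union> cball c r"
  proof (rule ccontr)
    assume nx: "x \<notin> V \<union> cball c r"
    then have lim: "x islimpt V" using x by (auto simp: closure_def)
    define e where "e = (dist c x - r) / 2"
    have e: "0 < e" using nx by (simp add: e_def)
    \<comment> \<open>two distinct vertices close to \<open>x\<close> span a segment that stays away from the ball\<close>
    obtain v where v: "v \<in> V" "v \<noteq> x" "dist v x < e" using lim e by (auto simp: islimpt_approachable)
    then obtain w where w: "w \<in> V" "w \<noteq> x" "dist w x < min e (dist v x)"
      using lim[unfolded islimpt_approachable, rule_format, of "min e (dist v x)"] e by auto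
    have "closed_segment v w \<subseteq> ball x e"
      using v w by (intro closed_segment_subset) (auto simp: dist_commute)
    moreover obtain y where "y \<in> closed_segment v w" "y \<in> cball c r"
      using segment_meets_ball[OF v(1) w(1)] w(3) by force
    ultimately have "dist x y < e" "dist c y \<le> r" by auto
    then show False using dist_triangle[of c x y] e by (simp add: e_def dist_commute)
  qed
qed

lemma illuminates_from_segment:
  assumes p: "p \<in> closed_segment v b" "p \<noteq> b" and b: "b \<in> cball c r"
    and t: "0 < t" "v + t *\<^sub>R u \<in> ball c r"
  shows "illuminates K u p"
proof -
  obtain \<mu> where \<mu>: "0 \<le> \<mu>" "\<mu> \<le> 1" "p = (1 - \<mu>) *\<^sub>R v + \<mu> *\<^sub>R b"
    using p(1) by (auto simp: in_segment)
  have "\<mu> \<noteq> 1" using \<mu>(3) p(2) by auto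
  then have \<mu>1: "0 < 1 - \<mu>" using \<mu>(2) by simp
  have "p + ((1 - \<mu>) * t) *\<^sub>R u - c = (1 - \<mu>) *\<^sub>R (v + t *\<^sub>R u - c) + \<mu> *\<^sub>R (b - c)"
    using \<mu>(3) by (simp add: algebra_simps)
  then have "norm (p + ((1 - \<mu>) * t) *\<^sub>R u - c) \<le> (1 - \<mu>) * norm (v + t *\<^sub>R u - c) + \<mu> * norm (b - c)"
    using \<mu>(1) \<mu>1 by (metis abs_of_nonneg less_imp_le norm_scaleR norm_triangle_ineq)
  also have "\<dots> < (1 - \<mu>) * r + \<mu> * r"
    using t(2) b \<mu>(1) \<mu>1
    by (intro add_less_le_mono mult_strict_left_mono mult_left_mono)
       (auto simp: dist_norm norm_minus_commute)
  finally have "p + ((1 - \<mu>) * t) *\<^sub>R u \<in> ball c r"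
    by (simp add: dist_norm norm_minus_commute algebra_simps)
  then show ?thesis
    using ball_subset_interior \<mu>1 t(1) unfolding illuminates_def by (metis mult_pos_pos subsetD)
qed

lemma illuminates_along_line:
  assumes seg: "p \<in> closed_segment v b" "p \<noteq> b" "b \<in> cball c r" and f: "f \<bullet> f = 1"
    and far: "r \<le> norm (v - c)" and cross: "(v - c) \<bullet> (v - c) - r^2 < (f \<bullet> (v - c))^2"
  shows "illuminates K f p \<or> illuminates K (- f) p"
proof -
  define u where "u = (if f \<bullet> (v - c) < 0 then f else - f)"
  have "r^2 \<le> (v - c) \<bullet> (v - c)"
    using far radius_pos by (metis power2_norm_eq_inner power_mono less_imp_le)
  then have "f \<bullet> (v - c) \<noteq> 0" using cross by auto
  then have u: "u = f \<or> u = - f" "u \<bullet> u = 1" "u \<bullet> (v - c) < 0"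
      "(u \<bullet> (v - c))^2 = (f \<bullet> (v - c))^2"
    using f by (auto simp: u_def)
  have "(v - c) - (u \<bullet> (v - c)) *\<^sub>R u \<in> ball 0 r"
    using line_meets_ball[OF u(2)] radius_pos cross u(4) by auto
  then have "v + (- (u \<bullet> (v - c))) *\<^sub>R u \<in> ball c r"
    by (simp add: dist_norm norm_minus_commute algebra_simps)
  moreover have "0 < - (u \<bullet> (v - c))" using u(3) by simp
  ultimately have "illuminates K u p" using illuminates_from_segment[OF seg] by blast
  then show ?thesis using u(1) by blast
qed

lemma illuminates_by_directions:
  assumes unit: "\<And>f. f \<in> F \<Longrightarrow> f \<bullet> f = 1"
    and spanning: "\<And>q. q \<noteq> 0 \<Longrightarrow> \<exists>f\<in>F. f \<bullet> q \<noteq> 0"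
    and crossing: "\<And>v. v \<in> V \<Longrightarrow> \<exists>f\<in>F. (v - c) \<bullet> (v - c) - r^2 < (f \<bullet> (v - c))^2"
    and p: "p \<in> K" "p \<notin> interior K"
  shows "\<exists>u\<in>F \<union> uminus ` F. illuminates K u p"
proof -
  \<comment> \<open>a point of the sphere is treated as the apex of the degenerate cap \<open>[p, c]\<close>\<close>
  obtain v b f where seg: "p \<in> closed_segment v b" "p \<noteq> b" "b \<in> cball c r" and f: "f \<in> F"
    and far: "r \<le> norm (v - c)" and cross: "(v - c) \<bullet> (v - c) - r^2 < (f \<bullet> (v - c))^2"
  proof (cases rule: boundary_point_cases[OF p])
    case 1
    then have "p - c \<noteq> 0" using radius_pos by auto
    then obtain f where f: "f \<in> F" "f \<bullet> (p - c) \<noteq> 0" using spanning by blast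
    have "(p - c) \<bullet> (p - c) = r^2"
      using 1 by (simp add: dist_norm norm_minus_commute power2_norm_eq_inner[symmetric])
    then show thesis
      using that[of p c f] 1 f radius_pos by (auto simp: dist_norm norm_minus_commute)
  next
    case (2 v b)
    then show thesis
      using that[OF 2(3,4,2)] crossing[OF 2(1)] radius_lt_norm[OF 2(1)] by auto
  qed
  then show ?thesis using illuminates_along_line[OF seg unit[OF f] far cross] by blast
qed

definition protrudes :: "'a \<Rightarrow> 'a \<Rightarrow> bool" where
  "protrudes n v \<longleftrightarrow> r * norm n < n \<bullet> (v - c)"

lemma not_protrudes_both:
  assumes "v \<in> V" "w \<in> V" "v \<noteq> w" "protrudes n v"
  shows "\<not> protrudes n w"
proof
  assume "protrudes n w"
  obtain y where "y \<in> closed_segment v w" and y: "y \<in> cball c r"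
    using segment_meets_ball[OF assms(1-3)] by blast
  then obtain t where t: "0 \<le> t" "t \<le> 1" "y - c = (1 - t) *\<^sub>R (v - c) + t *\<^sub>R (w - c)"
    by (auto simp: in_segment algebra_simps)
  then have y_eq: "n \<bullet> (y - c) = (1 - t) * (n \<bullet> (v - c)) + t * (n \<bullet> (w - c))"
    by (simp add: inner_add_right)
  have "r * norm n < n \<bullet> (y - c)"
  proof (cases "t = 0")
    case True
    then show ?thesis using y_eq assms(4) by (simp add: protrudes_def)
  next
    case False
    have "(1 - t) * (r * norm n) \<le> (1 - t) * (n \<bullet> (v - c))"
      using t(2) assms(4) by (intro mult_left_mono) (auto simp: protrudes_def)
    moreover have "t * (r * norm n) < t * (n \<bullet> (w - c))"
      using t(1) False \<open>protrudes n w\<close> by (intro mult_strict_left_mono) (auto simp: protrudes_def)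
    moreover have "r * norm n = (1 - t) * (r * norm n) + t * (r * norm n)"
      by (simp add: algebra_simps)
    ultimately show ?thesis using y_eq by linarith
  qed
  then show False using inner_le_of_mem_cball[of y c r n] y by linarith
qed

end

locale symmetric_ball_cap_body = ball_cap_body c r V K
  for c :: "'a::euclidean_space" and r V K +
  fixes x :: 'a
  assumes reflect_mem: "p \<in> K \<Longrightarrow> 2 *\<^sub>R x - p \<in> K"
    and two_le_dim: "2 \<le> DIM('a)"
begin

lemma exists_protruding_vertex:
  assumes "0 < n \<bullet> (x - c)"
  shows "\<exists>v\<in>V. protrudes n v"
proof (rule ccontr)
  assume "\<not> ?thesis"
  then have no_protrusion: "n \<bullet> (v - c) \<le> r * norm n" if "v \<in> V" for v
    using that by (auto simp: protrudes_def not_less)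
  have "cball c r \<union> V \<subseteq> {y. n \<bullet> y \<le> n \<bullet> c + r * norm n}"
  proof
    fix y assume "y \<in> cball c r \<union> V"
    then have "n \<bullet> (y - c) \<le> r * norm n"
      using inner_le_of_mem_cball[of y c r n] no_protrusion by blast
    then show "y \<in> {y. n \<bullet> y \<le> n \<bullet> c + r * norm n}" by (simp add: inner_diff_right)
  qed
  then have K_half: "K \<subseteq> {y. n \<bullet> y \<le> n \<bullet> c + r * norm n}"
    unfolding K_eq by (intro hull_minimal) (auto simp: convex_halfspace_le)
  have n: "n \<noteq> 0" using assms by auto
  define b where "b = c - (r / norm n) *\<^sub>R n"
  have "b \<in> K" using cball_subset radius_pos n by (auto simp: b_def dist_norm)
  then have "n \<bullet> (2 *\<^sub>R x - b) \<le> n \<bullet> c + r * norm n" using reflect_mem K_half by blast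
  moreover have "n \<bullet> ((r / norm n) *\<^sub>R n) = r * norm n"
    using n by (simp add: dot_square_norm power2_eq_square)
  ultimately have "n \<bullet> (x - c) \<le> 0" by (simp add: b_def inner_diff_right)
  then show False using assms by simp
qed

lemma center_eq: "x = c"
proof (rule ccontr)
  assume "x \<noteq> c"
  define d where "d = x - c"
  have d: "d \<noteq> 0" using \<open>x \<noteq> c\<close> by (simp add: d_def)
  obtain v0 where v0: "v0 \<in> V" "protrudes d v0"
    using exists_protruding_vertex[of d] d by (auto simp: d_def)
  \<comment> \<open>the open half-space of directions \<open>n\<close> with \<open>0 < d \<bullet> n\<close> is connected, but it is covered by
      the disjoint open sets of directions in which a given vertex protrudes\<close>
  define H where "H = {n. 0 < d \<bullet> n}"
  define A where "A = {n. protrudes n v0}"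
  define B where "B = (\<Union>v\<in>V - {v0}. {n. protrudes n v})"
  have open_AB: "open A" "open B"
    unfolding A_def B_def protrudes_def by (intro open_UN ballI open_Collect_less continuous_intros)+
  have cover: "H \<subseteq> A \<union> B"
  proof
    fix n assume "n \<in> H"
    then obtain v where "v \<in> V" "protrudes n v"
      using exists_protruding_vertex[of n] by (auto simp: H_def d_def inner_commute)
    then show "n \<in> A \<union> B" by (cases "v = v0") (auto simp: A_def B_def)
  qed
  have disjoint: "A \<inter> B \<inter> H = {}"
    using not_protrudes_both[OF v0(1)] unfolding A_def B_def by blast
  have "connected H" unfolding H_def by (intro convex_connected convex_halfspace_gt)
  then have "A \<inter> H = {} \<or> B \<inter> H = {}"
    using connectedD[OF _ open_AB disjoint cover] by blast
  moreover have "A \<inter> H \<noteq> {}" using v0 d by (auto simp: A_def H_def)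
  moreover have "B \<inter> H \<noteq> {}"
  proof -
    obtain n where "0 < d \<bullet> n" "n \<bullet> (v0 - c) \<le> r * norm n"
      using exists_direction_not_protruding[OF two_le_dim d radius_pos] by blast
    then have "n \<in> H" "n \<notin> A" by (auto simp: H_def A_def protrudes_def)
    then show ?thesis using cover by auto
  qed
  ultimately show False by blast
qed

lemma reflect_vertex_mem:
  assumes v: "v \<in> V"
  shows "2 *\<^sub>R c - v \<in> V"
proof (rule ccontr)
  assume not_vertex: "2 *\<^sub>R c - v \<notin> V"
  define h where "h = v - c"
  \<comment> \<open>by symmetry, \<open>2 c - v\<close> would be the unique point of \<open>K\<close> maximising \<open>- h\<close>, yet it is not
      among the generators of \<open>K\<close>\<close>
  have "cball c r \<union> V \<subseteq> {y. h \<bullet> c - h \<bullet> h < h \<bullet> y}"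
  proof
    fix y assume y: "y \<in> cball c r \<union> V"
    have "2 *\<^sub>R c - y \<in> K" using reflect_mem center_eq y cball_subset vertices_subset by auto
    moreover have "2 *\<^sub>R c - y \<noteq> v"
    proof
      assume "2 *\<^sub>R c - y = v"
      then have y_eq: "y = 2 *\<^sub>R c - v" by (simp add: algebra_simps)
      then have "c - y = v - c" by (simp add: algebra_simps scaleR_2)
      then have "dist c y = norm (v - c)" by (simp add: dist_norm)
      then show False using y y_eq not_vertex radius_lt_norm[OF v] by auto
    qed
    ultimately have "h \<bullet> ((2 *\<^sub>R c - y) - c) < h \<bullet> h"
      using vertex_exposed[OF v] by (simp add: h_def)
    then show "y \<in> {y. h \<bullet> c - h \<bullet> h < h \<bullet> y}"
      by (simp add: inner_diff_right scaleR_2 inner_add_right)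
  qed
  then have "K \<subseteq> {y. h \<bullet> c - h \<bullet> h < h \<bullet> y}"
    unfolding K_eq by (intro hull_minimal) (auto simp: convex_halfspace_gt)
  moreover have "2 *\<^sub>R c - v \<in> K" using reflect_mem center_eq v vertices_subset by auto
  ultimately have "h \<bullet> c - h \<bullet> h < h \<bullet> (2 *\<^sub>R c - v)" by blast
  moreover have "2 *\<^sub>R c - v = c - h" by (simp add: h_def algebra_simps scaleR_2)
  ultimately show False by (simp add: inner_diff_right)
qed

lemma symmetric_cap_vertices_scale: "symmetric_cap_vertices (scale ` V)"
proof
  fix w assume "w \<in> scale ` V"
  then obtain v where v: "v \<in> V" "w = scale v" by blast
  show "1 < norm w" using one_less_norm_scale v by simp
  have "- w = (1 / r) *\<^sub>R (- (v - c))" using v(2) by (simp add: scale_def flip: scaleR_minus_right)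
  also have "- (v - c) = 2 *\<^sub>R c - v - c" by (simp add: algebra_simps scaleR_2)
  finally have "- w = scale (2 *\<^sub>R c - v)" by (simp only: scale_def)
  then show "- w \<in> scale ` V" using reflect_vertex_mem[OF v(1)] by blast
next
  fix v w assume "v \<in> scale ` V" "w \<in> scale ` V" "v \<noteq> w"
  then obtain v' w' where "v' \<in> V" "w' \<in> V" "v' \<noteq> w'" "v = scale v'" "w = scale w'"
    by blast
  then show "closed_segment v w \<inter> cball 0 1 \<noteq> {}"
    using scale_segment_meets_unit_ball by simp
qed

lemma bounded_vertices: "bounded V"
proof -
  have "(\<lambda>y. c + y) ` (\<lambda>w. r *\<^sub>R w) ` scale ` V = V"
    using radius_pos by (simp add: image_image scale_def)
  moreover have "bounded ((\<lambda>y. c + y) ` (\<lambda>w. r *\<^sub>R w) ` scale ` V)"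
    using symmetric_cap_vertices.bounded[OF symmetric_cap_vertices_scale]
    by (intro bounded_translation bounded_scaling)
  ultimately show ?thesis by (simp only:)
qed

lemma compact: "compact K"
proof -
  have "closure (cball c r \<union> V) \<subseteq> cball c r \<union> V"
    using closure_vertices_subset by (auto simp: closure_Un)
  then have "closed (cball c r \<union> V)" using closure_subset_eq by blast
  then have "compact (cball c r \<union> V)" using bounded_vertices by (simp add: compact_eq_bounded_closed)
  then show ?thesis unfolding K_eq by (rule compact_convex_hull)
qed

end

lemma symmetric_ball_cap_body_if_cap_body:
  fixes K :: "'a::euclidean_space set"
  assumes "cap_body K" "centrally_symmetric K" "2 \<le> DIM('a)"
  shows "\<exists>c r V x. symmetric_ball_cap_body c r V K x"
proof -
  obtain c r V where "0 < r" "V \<inter> cball c r = {}"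
      "\<forall>v\<in>V. \<forall>w\<in>V. v \<noteq> w \<longrightarrow> closed_segment v w \<inter> cball c r \<noteq> {}"
      "K = convex hull (cball c r \<union> V)"
    using assms(1) unfolding cap_body_def by blast
  moreover obtain x where "\<forall>p\<in>K. 2 *\<^sub>R x - p \<in> K"
    using assms(2) unfolding centrally_symmetric_def by blast
  ultimately have "symmetric_ball_cap_body c r V K x"
    using assms(3) by unfold_locales auto
  then show ?thesis by blast
qed

section \<open>Six directions suffice\<close>

lemma illumination_number_le:
  assumes "finite U" "U \<subseteq> sphere 0 1" "\<And>p. p \<in> frontier K \<Longrightarrow> \<exists>u\<in>U. illuminates K u p"
  shows "illumination_number K \<le> card U"
  unfolding illumination_number_def using assms by (intro Least_le) blast

lemma le_illumination_number:
  assumes "finite U0" "U0 \<subseteq> sphere 0 1" "\<And>p. p \<in> frontier K \<Longrightarrow> \<exists>u\<in>U0. illuminates K u p"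
    and lower: "\<And>U. \<lbrakk>finite U; \<And>p. p \<in> frontier K \<Longrightarrow> \<exists>u\<in>U. illuminates K u p\<rbrakk> \<Longrightarrow> m \<le> card U"
  shows "m \<le> illumination_number K"
proof -
  define P where "P n \<longleftrightarrow> (\<exists>U. finite U \<and> card U = n \<and> U \<subseteq> sphere 0 1 \<and>
      (\<forall>p\<in>frontier K. \<exists>u\<in>U. illuminates K u p))" for n
  have "P (card U0)" using assms(1-3) by (auto simp: P_def)
  then have "P (illumination_number K)"
    unfolding illumination_number_def P_def[symmetric] by (rule LeastI)
  then obtain U where "finite U" "card U = illumination_number K"
      "\<And>p. p \<in> frontier K \<Longrightarrow> \<exists>u\<in>U. illuminates K u p"
    unfolding P_def by blast
  then show ?thesis using lower by metis
qed

lemma symmetric_cap_body_illuminated_by_six: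
  fixes K :: "(real^3) set"
  assumes "cap_body K" "centrally_symmetric K"
  obtains U where "finite U" "card U \<le> 6" "U \<subseteq> sphere 0 1"
    "\<And>p. p \<in> frontier K \<Longrightarrow> \<exists>u\<in>U. illuminates K u p"
proof -
  obtain c r V x where "symmetric_ball_cap_body c r V K x"
    using symmetric_ball_cap_body_if_cap_body[OF assms] by fastforce
  then interpret symmetric_ball_cap_body c r V K x .
  obtain f1 f2 where frame: "f1 \<bullet> f1 = 1" "f2 \<bullet> f2 = 1" "f1 \<bullet> f2 = 0"
    and crossing: "\<And>w. w \<in> scale ` V \<Longrightarrow> \<exists>f\<in>{f1, f2, cross3 f1 f2}. w \<bullet> w - 1 < (f \<bullet> w)^2"
    using exists_crossing_frame[OF symmetric_cap_vertices_scale] by blast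
  define F where "F = {f1, f2, cross3 f1 f2}"
  have unit: "f \<bullet> f = 1" if "f \<in> F" for f
    using that frame orthonormal_cross3_unit[OF frame] by (auto simp: F_def)
  have "\<exists>u\<in>F \<union> uminus ` F. illuminates K u p" if "p \<in> frontier K" for p
  proof (rule illuminates_by_directions)
    show "f \<bullet> f = 1" if "f \<in> F" for f using unit that .
    show "\<exists>f\<in>F. f \<bullet> q \<noteq> 0" if "q \<noteq> 0" for q
      using orthonormal_cross3_parseval[OF frame, of q] that by (auto simp: F_def)
    show "\<exists>f\<in>F. (v - c) \<bullet> (v - c) - r^2 < (f \<bullet> (v - c))^2" if "v \<in> V" for v
      using crossing[of "scale v"] that crossing_scale_iff by (auto simp: F_def)
    show "p \<in> K" "p \<notin> interior K"
      using that compact compact_imp_closed frontier_subset_closed by (auto simp: frontier_def)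
  qed
  moreover have "card (F \<union> uminus ` F) \<le> 6"
  proof -
    have "card F \<le> 3" by (simp add: F_def card_insert_le_m1 card_insert_if)
    have "card (F \<union> uminus ` F) \<le> card F + card (uminus ` F)" by (rule card_Un_le)
    also have "\<dots> \<le> 2 * card F" using card_image_le[of F uminus] by (simp add: F_def)
    also have "\<dots> \<le> 6" using \<open>card F \<le> 3\<close> by simp
    finally show ?thesis .
  qed
  moreover have "F \<union> uminus ` F \<subseteq> sphere 0 1"
    using unit by (auto simp: norm_eq_sqrt_inner)
  ultimately show thesis using that[of "F \<union> uminus ` F"] by (simp add: F_def)
qed

theorem illumination_number_symmetric_cap_body_le:
  fixes K :: "(real^3) set"
  assumes "cap_body K" "centrally_symmetric K"
  shows "illumination_number K \<le> 6"
proof (rule symmetric_cap_body_illuminated_by_six[OF assms])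
  fix U assume U: "finite U" "card U \<le> 6" "U \<subseteq> sphere 0 1"
    "\<And>p. p \<in> frontier K \<Longrightarrow> \<exists>u\<in>U. illuminates K u p"
  have "illumination_number K \<le> card U" by (rule illumination_number_le[OF U(1,3,4)])
  then show ?thesis using U(2) by linarith
qed

section \<open>A symmetric cap body that needs six directions\<close>

definition octahedron_vertices :: "(real^3) set" where
  "octahedron_vertices = (\<lambda>(k, s). axis k s) ` (UNIV \<times> {1, -1})"

definition octahedral_cap_body :: "(real^3) set" where
  "octahedral_cap_body = convex hull (cball 0 (sqrt (1/2)) \<union> octahedron_vertices)"

lemma mem_octahedron_vertices: "v \<in> octahedron_vertices \<longleftrightarrow> (\<exists>k s. s \<in> {1, -1} \<and> v = axis k s)"
  by (auto simp: octahedron_vertices_def)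

lemma uminus_image_eq:
  fixes S :: "'a::group_add set"
  assumes "\<And>y. y \<in> S \<Longrightarrow> - y \<in> S"
  shows "uminus ` S = S"
proof
  show "uminus ` S \<subseteq> S" using assms by auto
  show "S \<subseteq> uminus ` S"
  proof
    fix y assume "y \<in> S"
    then have "- (- y) \<in> uminus ` S" using assms by blast
    then show "y \<in> uminus ` S" by simp
  qed
qed

lemma norm_axis_sign: "s \<in> {1, -1} \<Longrightarrow> norm (axis k s :: real^3) = 1"
  by (auto simp: norm_eq_sqrt_inner inner_axis_axis)

lemma axis_component: "(axis k s :: real^3) $ i = (if i = k then s else 0)"
  by (simp add: axis_def)

lemma exists_other_index: "\<exists>j::3. j \<noteq> k"
  using exhaust_3[of k] by (metis num1_eq1 one_neq_zero zero_neq_one exhaust_3 numeral_One)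

lemma card_octahedron_vertices: "card octahedron_vertices = 6"
proof -
  have "inj_on (\<lambda>(k, s). axis k s :: real^3) (UNIV \<times> {1, -1})"
    by (auto simp: inj_on_def axis_eq_axis)
  then have "card octahedron_vertices = card (UNIV \<times> {1, -1::real} :: (3 \<times> real) set)"
    unfolding octahedron_vertices_def by (rule card_image)
  also have "\<dots> = 6" by (simp add: card_cartesian_product)
  finally show ?thesis .
qed

lemma cap_body_octahedral: "cap_body octahedral_cap_body"
  unfolding cap_body_def
proof (intro exI conjI ballI impI)
  show "0 < sqrt (1/2::real)" by simp
  show "countable octahedron_vertices"
    unfolding octahedron_vertices_def
    by (intro countable_finite finite_imageI finite_cartesian_product) auto
  have "sqrt (1/2) < (1::real)" using real_sqrt_less_mono[of "1/2" 1] by simp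
  then show "octahedron_vertices \<inter> cball 0 (sqrt (1/2)) = {}"
    by (auto simp: mem_octahedron_vertices norm_axis_sign)
  show "octahedral_cap_body = convex hull (cball 0 (sqrt (1/2)) \<union> octahedron_vertices)"
    by (simp add: octahedral_cap_body_def)
  fix v w assume "v \<in> octahedron_vertices" "w \<in> octahedron_vertices" "v \<noteq> w"
  then obtain k s k' s' where ks: "s \<in> {1, -1}" "v = axis k s" "s' \<in> {1, -1}" "w = axis k' s'"
    and vw: "axis k s \<noteq> axis k' s'"
    by (auto simp: mem_octahedron_vertices)
  define m where "m = (1/2) *\<^sub>R (v + w)"
  have "m \<in> closed_segment v w"
    unfolding m_def in_segment by (intro exI[of _ "1/2"]) (auto simp: scaleR_add_right)
  moreover have "m \<bullet> m \<le> 1/2"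
  proof (cases "k = k'")
    case True
    then have "m = 0" using ks vw by (auto simp: m_def vec_eq_iff axis_def)
    then show ?thesis by simp
  next
    case False
    then show ?thesis
      using ks by (auto simp: m_def inner_add_left inner_add_right inner_axis_axis)
  qed
  then have "m \<in> cball 0 (sqrt (1/2))"
    by (simp add: norm_eq_sqrt_inner)
  ultimately show "closed_segment v w \<inter> cball 0 (sqrt (1/2)) \<noteq> {}" by blast
qed

lemma centrally_symmetric_octahedral: "centrally_symmetric octahedral_cap_body"
  unfolding centrally_symmetric_def
proof (intro exI[of _ 0] ballI)
  let ?S = "cball 0 (sqrt (1/2)) \<union> octahedron_vertices"
  have "- y \<in> ?S" if "y \<in> ?S" for y
  proof (cases "y \<in> octahedron_vertices")
    case True
    then obtain k s where "s \<in> {1, -1}" "y = axis k s" by (auto simp: mem_octahedron_vertices)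
    then have "- s \<in> {1, -1}" "- y = axis k (- s)" by (auto simp: vec_eq_iff axis_def)
    then have "- y \<in> octahedron_vertices" unfolding mem_octahedron_vertices by blast
    then show ?thesis by simp
  next
    case False
    then show ?thesis using that by simp
  qed
  then have "(\<lambda>x. (-1) *\<^sub>R x) ` ?S = ?S"
    using uminus_image_eq[of ?S] by simp
  then have "uminus ` octahedral_cap_body = octahedral_cap_body"
    unfolding octahedral_cap_body_def using convex_hull_scaling[of "-1" ?S] by simp
  moreover fix p assume "p \<in> octahedral_cap_body"
  ultimately show "2 *\<^sub>R 0 - p \<in> octahedral_cap_body" by force
qed

text \<open>Each vertex \<open>s e\<^sub>k\<close> is the apex of a cone \<open>s y\<^sub>k + \<bar>y\<^sub>j\<bar> \<le> 1\<close> containing the body, so a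
  direction illuminating it lies in the open cone \<open>s u\<^sub>k + \<bar>u\<^sub>j\<bar> < 0\<close>; these six cones are
  pairwise disjoint.\<close>

lemma octahedral_cap_body_cone:
  assumes y: "y \<in> octahedral_cap_body" and s: "s \<in> {1, -1}" and jk: "j \<noteq> k"
  shows "s * y $ k + \<bar>y $ j\<bar> \<le> 1"
proof -
  define C where "C = {y :: real^3. s * y $ k + \<bar>y $ j\<bar> \<le> 1}"
  have "convex C"
  proof (rule convexI)
    fix a b :: "real^3" and u v :: real
    assume a: "a \<in> C" and b: "b \<in> C" and u: "0 \<le> u" "0 \<le> v" "u + v = 1"
    have "\<bar>u * a $ j + v * b $ j\<bar> \<le> u * \<bar>a $ j\<bar> + v * \<bar>b $ j\<bar>"
      using u by (metis abs_mult abs_of_nonneg abs_triangle_ineq)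
    moreover have "u * (s * a $ k + \<bar>a $ j\<bar>) \<le> u * 1" "v * (s * b $ k + \<bar>b $ j\<bar>) \<le> v * 1"
      using a b u by (intro mult_left_mono; simp add: C_def)+
    ultimately show "u *\<^sub>R a + v *\<^sub>R b \<in> C"
      using u by (simp add: C_def algebra_simps)
  qed
  moreover have "cball 0 (sqrt (1/2)) \<subseteq> C"
  proof
    fix z :: "real^3" assume z: "z \<in> cball 0 (sqrt (1/2))"
    define t :: real where "t = (if 0 \<le> z $ j then 1 else -1)"
    define a where "a = axis k s + axis j t"
    have "a \<bullet> a = 2" using s jk by (auto simp: a_def t_def inner_add_left inner_add_right inner_axis_axis)
    then have "norm a = sqrt 2" by (simp add: norm_eq_sqrt_inner)
    have "s * z $ k + \<bar>z $ j\<bar> = a \<bullet> z" by (simp add: a_def t_def inner_add_left inner_axis')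
    also have "\<dots> \<le> norm a * norm z" by (rule norm_cauchy_schwarz)
    also have "\<dots> \<le> sqrt 2 * sqrt (1/2)"
      using z unfolding \<open>norm a = sqrt 2\<close> by (intro mult_left_mono) auto
    also have "\<dots> = 1" by (simp add: real_sqrt_mult[symmetric])
    finally show "z \<in> C" by (simp add: C_def)
  qed
  moreover have "octahedron_vertices \<subseteq> C"
    using s jk by (auto simp: C_def mem_octahedron_vertices axis_component)
  ultimately have "octahedral_cap_body \<subseteq> C"
    unfolding octahedral_cap_body_def by (intro hull_minimal) auto
  then show ?thesis using y by (auto simp: C_def)
qed

lemma octahedral_cap_body_cone_interior:
  assumes y: "y \<in> interior octahedral_cap_body" and s: "s \<in> {1, -1}" and jk: "j \<noteq> k"
  shows "s * y $ k + \<bar>y $ j\<bar> < 1"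
proof -
  obtain e where e: "0 < e" "ball y e \<subseteq> octahedral_cap_body" using y by (auto simp: mem_interior)
  define y' where "y' = y + (e/2) *\<^sub>R axis k s"
  have "norm (axis k s) = 1" using s by (rule norm_axis_sign)
  then have "y' \<in> octahedral_cap_body" using e by (auto simp: y'_def dist_norm)
  then have "s * y' $ k + \<bar>y' $ j\<bar> \<le> 1" using octahedral_cap_body_cone s jk by blast
  moreover have "s * y' $ k = s * y $ k + e/2" "y' $ j = y $ j"
    using s jk by (auto simp: y'_def axis_component algebra_simps)
  ultimately show ?thesis using e by simp
qed

lemma axis_mem_frontier_octahedral:
  assumes s: "s \<in> {1, -1}"
  shows "axis k s \<in> frontier octahedral_cap_body"
proof -
  have "axis k s \<in> octahedral_cap_body"
    unfolding octahedral_cap_body_def using s by (intro hull_inc) (auto simp: mem_octahedron_vertices)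
  moreover obtain j where "j \<noteq> k" using exists_other_index by blast
  then have "axis k s \<notin> interior octahedral_cap_body"
    using octahedral_cap_body_cone_interior[OF _ s] s by (force simp: axis_component)
  ultimately show ?thesis using closure_subset by (auto simp: frontier_def)
qed

lemma illuminates_axis_octahedral:
  assumes s: "s \<in> {1, -1}" and u: "illuminates octahedral_cap_body u (axis k s)" and jk: "j \<noteq> k"
  shows "s * u $ k + \<bar>u $ j\<bar> < 0"
proof -
  obtain t where t: "0 < t" "axis k s + t *\<^sub>R u \<in> interior octahedral_cap_body"
    using u by (auto simp: illuminates_def)
  have "s * (axis k s + t *\<^sub>R u) $ k + \<bar>(axis k s + t *\<^sub>R u) $ j\<bar> < 1"
    using octahedral_cap_body_cone_interior[OF t(2) s jk] .
  moreover have "s * (axis k s + t *\<^sub>R u) $ k = 1 + t * (s * u $ k)"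
    "\<bar>(axis k s + t *\<^sub>R u) $ j\<bar> = t * \<bar>u $ j\<bar>"
    using s jk t(1) by (auto simp: axis_component abs_mult algebra_simps)
  ultimately have "t * (s * u $ k + \<bar>u $ j\<bar>) < 0" by (simp add: algebra_simps)
  then show ?thesis using t(1) by (simp add: mult_less_0_iff)
qed

lemma illuminated_axis_unique:
  fixes u :: "real^3"
  assumes s: "s \<in> {1, -1}" and s': "s' \<in> {1, -1}"
    and u: "\<And>j. j \<noteq> k \<Longrightarrow> s * u $ k + \<bar>u $ j\<bar> < 0"
    and u': "\<And>j. j \<noteq> k' \<Longrightarrow> s' * u $ k' + \<bar>u $ j\<bar> < 0"
  shows "axis k s = axis k' s'"
proof (cases "k = k'")
  case True
  obtain j where "j \<noteq> k" using exists_other_index by blast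
  then have "s * u $ k + \<bar>u $ j\<bar> < 0" "s' * u $ k + \<bar>u $ j\<bar> < 0" using u u' True by auto
  then have "s = s'" using s s' by auto
  then show ?thesis using True by simp
next
  case False
  then have "s * u $ k + \<bar>u $ k'\<bar> < 0" "s' * u $ k' + \<bar>u $ k\<bar> < 0" using u u' by auto
  then show ?thesis using s s' by (auto simp: abs_if split: if_splits)
qed

lemma six_le_card_illuminating_octahedral:
  assumes "finite U" and U: "\<And>p. p \<in> frontier octahedral_cap_body \<Longrightarrow> \<exists>u\<in>U. illuminates octahedral_cap_body u p"
  shows "6 \<le> card U"
proof -
  have "v \<in> frontier octahedral_cap_body" if "v \<in> octahedron_vertices" for v
    using that axis_mem_frontier_octahedral by (auto simp: mem_octahedron_vertices)
  then have "\<exists>u. u \<in> U \<and> illuminates octahedral_cap_body u v" if "v \<in> octahedron_vertices" for v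
    using that U by blast
  then obtain g where g: "\<And>v. v \<in> octahedron_vertices \<Longrightarrow> g v \<in> U \<and> illuminates octahedral_cap_body (g v) v"
    by metis
  have "inj_on g octahedron_vertices"
  proof (rule inj_onI)
    fix v v' assume v: "v \<in> octahedron_vertices" and v': "v' \<in> octahedron_vertices" and eq: "g v = g v'"
    obtain k s k' s' where ks: "s \<in> {1, -1}" "v = axis k s" "s' \<in> {1, -1}" "v' = axis k' s'"
      using v v' by (auto simp: mem_octahedron_vertices)
    have "illuminates octahedral_cap_body (g v) (axis k s)"
      "illuminates octahedral_cap_body (g v) (axis k' s')"
      using g[OF v] g[OF v'] eq ks by auto
    then have "axis k s = axis k' s'"
      using illuminated_axis_unique[OF ks(1,3)] illuminates_axis_octahedral[OF ks(1)]
        illuminates_axis_octahedral[OF ks(3)] by blast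
    then show "v = v'" using ks by simp
  qed
  moreover have "g ` octahedron_vertices \<subseteq> U" using g by blast
  ultimately have "card octahedron_vertices \<le> card U" using card_inj_on_le assms(1) by blast
  then show ?thesis by (simp add: card_octahedron_vertices)
qed

theorem illumination_number_octahedral: "illumination_number octahedral_cap_body = 6"
proof (rule symmetric_cap_body_illuminated_by_six[OF cap_body_octahedral centrally_symmetric_octahedral])
  fix U assume U: "finite U" "card U \<le> 6" "U \<subseteq> sphere 0 1"
    "\<And>p. p \<in> frontier octahedral_cap_body \<Longrightarrow> \<exists>u\<in>U. illuminates octahedral_cap_body u p"
  have "6 \<le> illumination_number octahedral_cap_body"
    by (rule le_illumination_number[OF U(1,3,4) six_le_card_illuminating_octahedral])
  moreover have "illumination_number octahedral_cap_body \<le> 6"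
    using illumination_number_symmetric_cap_body_le[OF cap_body_octahedral centrally_symmetric_octahedral] .
  ultimately show ?thesis by simp
qed

theorem theorem2:
  shows "(\<forall>K :: (real^3) set. cap_body K \<and> centrally_symmetric K \<longrightarrow> illumination_number K \<le> 6)
       \<and> (\<exists>K :: (real^3) set. cap_body K \<and> centrally_symmetric K \<and> illumination_number K = 6)"
proof (intro conjI allI impI exI[of _ octahedral_cap_body])
  show "illumination_number K \<le> 6" if "cap_body K \<and> centrally_symmetric K" for K :: "(real^3) set"
    using that illumination_number_symmetric_cap_body_le by blast
qed (simp_all add: cap_body_octahedral centrally_symmetric_octahedral illumination_number_octahedral)

end
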